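(* Fix $n \ge n_0$ where $n_0$ is a sufficiently large universal constant. Let $G$ be drawn uniformly at random from $\mathcal{G}_{2n}$. With probability at least $1 - \frac{1}{n}$, $G$ is $\beta$-balanced for $\beta = 8 n$.
   Context: Fix disjoint vertex sets $L,R$ with $|L|=|R|=n$ and a fixed perfect matching $M$ of directed edges from $L$ to $R$. $\mathcal{G}_{2n}$ is the set of all unweighted directed graphs on vertex set $L\cup R$ whose set of edges from $L$ to $R$ is exactly $M$, whose edges from $R$ to $L$ form an arbitrary subset of $R\times L$, and which have no other edges (equivalently, a uniform element includes each pair $(v,u)\in R\times L$ as an edge independently with probability $1/2$). An unweighted directed graph is $\beta$-balanced if it is strongly connected and for every $\varnothing\ne S\subsetneq V$ the number of edges leaving $S$ is at most $\beta$ times the number of edges entering $S$. *)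

theory Defs
  imports "HOL-Probability.Probability"
begin

type_synonym vert = "nat + nat"

definition Lside :: "nat \<Rightarrow> vert set" where "Lside n = Inl ` {..<n}"
definition Rside :: "nat \<Rightarrow> vert set" where "Rside n = Inr ` {..<n}"

definition matching :: "nat \<Rightarrow> (nat \<Rightarrow> nat) \<Rightarrow> (vert \<times> vert) set" where
  "matching n \<pi> = {(Inl i, Inr (\<pi> i)) | i. i < n}"

definition graph_of :: "nat \<Rightarrow> (nat \<Rightarrow> nat) \<Rightarrow> (vert \<times> vert) set \<Rightarrow> (vert \<times> vert) set" where
  "graph_of n \<pi> B = matching n \<pi> \<union> B"

definition strongly_connected :: "'a set \<Rightarrow> ('a \<times> 'a) set \<Rightarrow> bool" where
  "strongly_connected V E \<longleftrightarrow> (\<forall>u\<in>V. \<forall>v\<in>V. (u, v) \<in> (E \<inter> V \<times> V)\<^sup>*)"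

definition out_edges :: "'a set \<Rightarrow> ('a \<times> 'a) set \<Rightarrow> 'a set \<Rightarrow> ('a \<times> 'a) set" where
  "out_edges V E S = {(u, v) \<in> E. u \<in> S \<and> v \<in> V - S}"

definition in_edges :: "'a set \<Rightarrow> ('a \<times> 'a) set \<Rightarrow> 'a set \<Rightarrow> ('a \<times> 'a) set" where
  "in_edges V E S = {(u, v) \<in> E. u \<in> V - S \<and> v \<in> S}"

definition balanced :: "real \<Rightarrow> 'a set \<Rightarrow> ('a \<times> 'a) set \<Rightarrow> bool" where
  "balanced \<beta> V E \<longleftrightarrow> strongly_connected V E \<and>
     (\<forall>S. S \<noteq> {} \<and> S \<subset> V \<longrightarrow>
        real (card (out_edges V E S)) \<le> \<beta> * real (card (in_edges V E S)))"

end

theory Submission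
  imports Defs "HOL-Real_Asymp.Real_Asymp"
begin

(* Call a set B of back edges good if it meets every rectangle S x T with S a subset of R and
   T a subset of L, both nonempty, and |S| + |T| + min |S| |T| >= n.  If the shorter side has s
   elements, such a rectangle has at least s (n div 3) cells and there are at most n^(3s) such
   rectangles, so by the union bound a uniformly random B fails to be good with probability at most
   (n+1)^2 n^3 / 2^(n div 3), which is below 1/n for large n.
   Now let B be good and let the cut S contain a vertices of L and b vertices of R.  At most
   a + b (n - a) edges leave S.  At least b - a matching edges enter S, and goodness of the
   subrectangles of (R - S) x (S restricted to L) supplies back edges into S; together at least
   (1 + min b (n - a)) / 5 edges enter S.  Hence the graph is strongly connected and 5n-balanced. *)

definition large_rectangle :: "nat \<Rightarrow> nat \<Rightarrow> nat \<Rightarrow> bool" where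
  "large_rectangle n s t \<longleftrightarrow> 1 \<le> s \<and> 1 \<le> t \<and> n \<le> s + t + min s t"

definition hits_large_rectangles :: "nat \<Rightarrow> 'a set \<Rightarrow> 'b set \<Rightarrow> ('a \<times> 'b) set \<Rightarrow> bool" where
  "hits_large_rectangles n X Y B \<longleftrightarrow>
     (\<forall>S\<subseteq>X. \<forall>T\<subseteq>Y. large_rectangle n (card S) (card T) \<longrightarrow> B \<inter> S \<times> T \<noteq> {})"

lemma card_le_rectangle_edges:
  assumes "finite S" "finite T"
    and empty_rows: "\<And>S0. S0 \<subseteq> S \<Longrightarrow> S0 \<noteq> {} \<Longrightarrow> B \<inter> S0 \<times> T = {}
      \<Longrightarrow> 2 * card S0 + card T < n"
    and "n \<le> card S + card T + D"
  shows "card S \<le> 2 * card (B \<inter> S \<times> T) + D"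
proof -
  define S0 where "S0 = {s \<in> S. \<forall>t\<in>T. (s, t) \<notin> B}"
  have "S - S0 \<subseteq> fst ` (B \<inter> S \<times> T)"
    unfolding S0_def by force
  then have "card (S - S0) \<le> card (B \<inter> S \<times> T)"
    using assms(1,2) by (meson card_image_le card_mono finite_Int finite_SigmaI finite_imageI order_trans)
  moreover have "S0 \<subseteq> S"
    unfolding S0_def by blast
  moreover have "S0 = {} \<or> 2 * card S0 + card T < n"
    using empty_rows[of S0] unfolding S0_def by blast
  ultimately show ?thesis
    using assms(1,4) card_Diff_subset[of S0 S] card_mono[of S S0] finite_subset[of S0 S] by force
qed

lemma card_converse: "card (r\<inverse>) = card r"
proof -
  have "r\<inverse> = prod.swap ` r" by force
  then show ?thesis by (simp add: card_image)
qed

lemma hits_large_rectangles_card_edges: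
  assumes hits: "hits_large_rectangles n X Y B" and "S \<subseteq> X" "T \<subseteq> Y"
    and "finite S" "finite T" "S \<noteq> {}" "T \<noteq> {}" "n \<le> card S + card T + D"
  shows "min (card S) (card T) \<le> 2 * card (B \<inter> S \<times> T) + D"
proof (cases "card S \<le> card T")
  case True
  have "2 * card S0 + card T < n" if "S0 \<subseteq> S" "S0 \<noteq> {}" "B \<inter> S0 \<times> T = {}" for S0
  proof -
    have "1 \<le> card S0" "card S0 \<le> card T" "1 \<le> card T"
      using that True assms(4-7) card_mono[of S S0] finite_subset[of S0 S]
      by (auto simp: Suc_le_eq card_gt_0_iff)
    moreover have "\<not> large_rectangle n (card S0) (card T)"
      using hits that assms(2,3) unfolding hits_large_rectangles_def by blast
    ultimately show ?thesis
      unfolding large_rectangle_def by simp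
  qed
  then show ?thesis
    using card_le_rectangle_edges[of S T B n D] True assms(4,5,8) by simp
next
  case False
  have "2 * card T0 + card S < n" if "T0 \<subseteq> T" "T0 \<noteq> {}" "B\<inverse> \<inter> T0 \<times> S = {}" for T0
  proof -
    have "1 \<le> card T0" "card T0 \<le> card S" "1 \<le> card S"
      using that False assms(4-7) card_mono[of T T0] finite_subset[of T0 T]
      by (auto simp: Suc_le_eq card_gt_0_iff)
    moreover have "\<not> large_rectangle n (card S) (card T0)"
      using hits that assms(2,3) unfolding hits_large_rectangles_def by blast
    ultimately show ?thesis
      unfolding large_rectangle_def by simp
  qed
  moreover have "B\<inverse> \<inter> T \<times> S = (B \<inter> S \<times> T)\<inverse>"
    by blast
  ultimately show ?thesis
    using card_le_rectangle_edges[of T S "B\<inverse>" n D] False assms(4,5,8) by (simp add: card_converse)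
qed

lemma strongly_connected_if_in_edges:
  assumes "\<And>S. S \<noteq> {} \<Longrightarrow> S \<subset> V \<Longrightarrow> in_edges V E S \<noteq> {}"
  shows "strongly_connected V E"
  unfolding strongly_connected_def
proof (intro ballI)
  fix u v assume uv: "u \<in> V" "v \<in> V"
  define T where "T = {w \<in> V. (w, v) \<in> (E \<inter> V \<times> V)\<^sup>*}"
  show "(u, v) \<in> (E \<inter> V \<times> V)\<^sup>*"
  proof (rule ccontr)
    assume "(u, v) \<notin> (E \<inter> V \<times> V)\<^sup>*"
    then have "T \<subset> V" "v \<in> T"
      using uv unfolding T_def by auto
    with assms obtain w z where "(w, z) \<in> E" "w \<in> V - T" "z \<in> T"
      unfolding in_edges_def by blast
    then show False
      unfolding T_def by (auto intro: converse_rtrancl_into_rtrancl)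
  qed
qed

lemma finite_in_edges: "finite E \<Longrightarrow> finite (in_edges V E S)"
  unfolding in_edges_def by (rule finite_subset[rotated]) auto

lemma balanced_mono:
  assumes "balanced \<beta> V E" "\<beta> \<le> \<beta>'"
  shows "balanced \<beta>' V E"
  using assms unfolding balanced_def by (meson mult_right_mono of_nat_0_le_iff order_trans)

lemma add_mult_diff_le_mult_Suc_min:
  fixes a b n :: nat
  assumes "a \<le> n" "b \<le> n"
  shows "a + b * (n - a) \<le> n * (1 + min b (n - a))"
proof (cases "b \<le> n - a")
  case True
  have "b * (n - a) \<le> n * b"
    by (simp add: mult.commute)
  moreover have "n * (1 + min b (n - a)) = n + n * b"
    using True by simp
  ultimately show ?thesis
    using assms(1) by linarith
next
  case False
  have "b * (n - a) \<le> n * (n - a)"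
    using assms(2) by (rule mult_right_mono) simp
  moreover have "n * (1 + min b (n - a)) = n + n * (n - a)"
    using False by simp
  ultimately show ?thesis
    using assms(1) by linarith
qed

locale matched_bipartite =
  fixes n :: nat and L R :: "'a set" and M B :: "('a \<times> 'a) set"
  assumes finite_L: "finite L" and finite_R: "finite R"
    and card_L: "card L = n" and card_R: "card R = n"
    and M_subset: "M \<subseteq> L \<times> R" and inj_on_fst_M: "inj_on fst M"
    and bij_betw_snd_M: "bij_betw snd M R"
    and B_subset: "B \<subseteq> R \<times> L"
begin

lemma finite_edges: "finite (M \<union> B)"
  using M_subset B_subset finite_L finite_R by (meson finite_SigmaI finite_UnI finite_subset)

lemma card_Int_L_le: "card (S \<inter> L) \<le> n"
  using card_L finite_L by (metis Int_lower2 card_mono)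

lemma card_Int_R_le: "card (S \<inter> R) \<le> n"
  using card_R finite_R by (metis Int_lower2 card_mono)

lemma card_matching_from: "card (M \<inter> A \<times> UNIV) \<le> card (A \<inter> L)"
proof (rule card_inj_on_le)
  show "inj_on fst (M \<inter> A \<times> UNIV)"
    using inj_on_fst_M by (rule inj_on_subset) blast
  show "fst ` (M \<inter> A \<times> UNIV) \<subseteq> A \<inter> L"
    using M_subset by auto
qed (use finite_L in simp)

lemma card_matching_into:
  assumes "T \<subseteq> R"
  shows "card (M \<inter> UNIV \<times> T) = card T"
proof -
  have "snd ` (M \<inter> UNIV \<times> T) = T"
    using bij_betw_imp_surj_on[OF bij_betw_snd_M] assms by force
  moreover have "inj_on snd (M \<inter> UNIV \<times> T)"
    using bij_betw_imp_inj_on[OF bij_betw_snd_M] by (rule inj_on_subset) blast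
  ultimately show ?thesis
    using card_image by fastforce
qed

lemma card_out_edges_le:
  "card (out_edges (L \<union> R) (M \<union> B) S) \<le> card (S \<inter> L) + card (S \<inter> R) * (n - card (S \<inter> L))"
proof -
  have "out_edges (L \<union> R) (M \<union> B) S \<subseteq> (M \<inter> S \<times> UNIV) \<union> (S \<inter> R) \<times> (L - S)"
    using B_subset unfolding out_edges_def by auto
  then have "card (out_edges (L \<union> R) (M \<union> B) S) \<le> card (M \<inter> S \<times> UNIV \<union> (S \<inter> R) \<times> (L - S))"
    using finite_edges finite_L finite_R by (intro card_mono) auto
  also have "\<dots> \<le> card (M \<inter> S \<times> UNIV) + card ((S \<inter> R) \<times> (L - S))"
    by (rule card_Un_le)
  also have "card ((S \<inter> R) \<times> (L - S)) = card (S \<inter> R) * (n - card (S \<inter> L))"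
    using finite_L card_L by (simp add: card_cartesian_product Diff_Int2 card_Diff_subset_Int Int_commute)
  finally show ?thesis
    using card_matching_from[of S] by linarith
qed

lemma card_in_edges_ge_matching:
  "card (S \<inter> R) - card (S \<inter> L) \<le> card (in_edges (L \<union> R) (M \<union> B) S)"
proof -
  have "M \<inter> UNIV \<times> (S \<inter> R) - M \<inter> S \<times> UNIV \<subseteq> in_edges (L \<union> R) (M \<union> B) S"
    using M_subset unfolding in_edges_def by auto
  then have "card (M \<inter> UNIV \<times> (S \<inter> R) - M \<inter> S \<times> UNIV)
      \<le> card (in_edges (L \<union> R) (M \<union> B) S)"
    using finite_edges finite_in_edges by (intro card_mono)
  moreover have "card (M \<inter> UNIV \<times> (S \<inter> R)) - card (M \<inter> S \<times> UNIV)
      \<le> card (M \<inter> UNIV \<times> (S \<inter> R) - M \<inter> S \<times> UNIV)"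
    using finite_edges by (intro diff_card_le_card_Diff) auto
  ultimately show ?thesis
    using card_matching_into[of "S \<inter> R"] card_matching_from[of S] by simp
qed

lemma card_in_edges_ge_back_edges:
  assumes hits: "hits_large_rectangles n R L B" and "1 \<le> card (S \<inter> L)" "card (S \<inter> R) < n"
  shows "min (n - card (S \<inter> R)) (card (S \<inter> L))
    \<le> 2 * card (in_edges (L \<union> R) (M \<union> B) S) + (card (S \<inter> R) - card (S \<inter> L))"
proof -
  have "card (R - S) = n - card (S \<inter> R)"
    using finite_R card_R by (simp add: Diff_Int2 card_Diff_subset_Int Int_commute)
  moreover have "R - S \<noteq> {}"
    using assms(3) calculation by (metis card.empty diff_is_0_eq not_le)
  moreover have "S \<inter> L \<noteq> {}"
    using assms(2) by auto
  ultimately have "min (n - card (S \<inter> R)) (card (S \<inter> L))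
      \<le> 2 * card (B \<inter> (R - S) \<times> (S \<inter> L)) + (card (S \<inter> R) - card (S \<inter> L))"
    using hits_large_rectangles_card_edges[OF hits, of "R - S" "S \<inter> L"] finite_L finite_R by auto
  moreover have "card (B \<inter> (R - S) \<times> (S \<inter> L)) \<le> card (in_edges (L \<union> R) (M \<union> B) S)"
    using finite_in_edges[OF finite_edges] by (rule card_mono) (auto simp: in_edges_def)
  ultimately show ?thesis
    by linarith
qed

lemma card_in_edges_lower_bound:
  assumes hits: "hits_large_rectangles n R L B" and S: "S \<noteq> {}" "S \<subset> L \<union> R"
  defines "a \<equiv> card (S \<inter> L)" and "b \<equiv> card (S \<inter> R)"
    and "i \<equiv> card (in_edges (L \<union> R) (M \<union> B) S)"
  shows "1 \<le> i" and "1 + min b (n - a) \<le> 5 * i"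
proof -
  have "a \<le> n" "b \<le> n"
    unfolding a_def b_def by (rule card_Int_L_le card_Int_R_le)+
  have "a \<noteq> 0 \<or> b \<noteq> 0"
    using S finite_L finite_R unfolding a_def b_def by auto
  have "\<not> (a = n \<and> b = n)"
  proof
    assume "a = n \<and> b = n"
    then have "S \<inter> L = L" "S \<inter> R = R"
      using card_L card_R finite_L finite_R unfolding a_def b_def by (metis Int_lower2 card_subset_eq)+
    then show False
      using S by blast
  qed
  have matching: "b - a \<le> i"
    unfolding a_def b_def i_def by (rule card_in_edges_ge_matching)
  have back_edges: "min (n - b) a \<le> 2 * i + (b - a)" if "1 \<le> a" "b < n"
    using card_in_edges_ge_back_edges[OF hits] that unfolding a_def b_def i_def .
  consider "a = 0" | "b = n" | "1 \<le> a" "b < n"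
    using \<open>b \<le> n\<close> by linarith
  then have "1 \<le> i \<and> 1 + min b (n - a) \<le> 5 * i"
  proof cases
    case 1
    then show ?thesis
      using \<open>a \<noteq> 0 \<or> b \<noteq> 0\<close> matching by linarith
  next
    case 2
    then show ?thesis
      using \<open>\<not> (a = n \<and> b = n)\<close> \<open>a \<le> n\<close> matching by linarith
  next
    case 3
    then show ?thesis
      using back_edges[OF 3] matching by linarith
  qed
  then show "1 \<le> i" "1 + min b (n - a) \<le> 5 * i"
    by auto
qed

theorem balanced_if_hits_large_rectangles:
  assumes hits: "hits_large_rectangles n R L B"
  shows "balanced (5 * real n) (L \<union> R) (M \<union> B)"
  unfolding balanced_def
proof (intro conjI allI impI)
  show "strongly_connected (L \<union> R) (M \<union> B)"
  proof (rule strongly_connected_if_in_edges)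
    fix S assume "S \<noteq> {}" "S \<subset> L \<union> R"
    then have "1 \<le> card (in_edges (L \<union> R) (M \<union> B) S)"
      by (rule card_in_edges_lower_bound(1)[OF hits])
    then show "in_edges (L \<union> R) (M \<union> B) S \<noteq> {}"
      by auto
  qed
next
  fix S assume S: "S \<noteq> {} \<and> S \<subset> L \<union> R"
  define a b where "a = card (S \<inter> L)" and "b = card (S \<inter> R)"
  have "card (out_edges (L \<union> R) (M \<union> B) S) \<le> a + b * (n - a)"
    unfolding a_def b_def by (rule card_out_edges_le)
  also have "\<dots> \<le> n * (1 + min b (n - a))"
    using card_Int_L_le card_Int_R_le unfolding a_def b_def by (rule add_mult_diff_le_mult_Suc_min)
  also have "\<dots> \<le> n * (5 * card (in_edges (L \<union> R) (M \<union> B) S))"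
    using card_in_edges_lower_bound(2)[OF hits] S unfolding a_def b_def by (intro mult_left_mono) auto
  finally have "real (card (out_edges (L \<union> R) (M \<union> B) S))
      \<le> real (n * (5 * card (in_edges (L \<union> R) (M \<union> B) S)))"
    by (rule of_nat_mono)
  then show "real (card (out_edges (L \<union> R) (M \<union> B) S))
      \<le> 5 * real n * real (card (in_edges (L \<union> R) (M \<union> B) S))"
    by simp
qed

end

lemma matched_bipartite_matching:
  assumes \<pi>: "bij_betw \<pi> {..<n} {..<n}" and B: "B \<subseteq> Rside n \<times> Lside n"
  shows "matched_bipartite n (Lside n) (Rside n) (matching n \<pi>) B"
proof
  have M: "matching n \<pi> = (\<lambda>i. (Inl i, Inr (\<pi> i))) ` {..<n}"
    unfolding matching_def by blast
  show "bij_betw snd (matching n \<pi>) (Rside n)"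
    unfolding bij_betw_def M Rside_def image_image
    using bij_betw_imp_inj_on[OF \<pi>] bij_betw_imp_surj_on[OF \<pi>] by (auto simp: inj_on_def)
  show "inj_on fst (matching n \<pi>)"
    unfolding M by (auto simp: inj_on_def)
  show "matching n \<pi> \<subseteq> Lside n \<times> Rside n"
    unfolding M Lside_def Rside_def using bij_betw_imp_surj_on[OF \<pi>] by auto
qed (use B in \<open>auto simp: Lside_def Rside_def card_image\<close>)

lemma finite_Lside: "finite (Lside n)" and finite_Rside: "finite (Rside n)"
  and card_Lside: "card (Lside n) = n" and card_Rside: "card (Rside n) = n"
  by (simp_all add: Lside_def Rside_def card_image)

lemma balanced_graph_of:
  assumes "bij_betw \<pi> {..<n} {..<n}" "B \<subseteq> Rside n \<times> Lside n"
    and "hits_large_rectangles n (Rside n) (Lside n) B"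
  shows "balanced (5 * real n) (Lside n \<union> Rside n) (graph_of n \<pi> B)"
  unfolding graph_of_def
  using matched_bipartite_matching[OF assms(1,2)] assms(3)
  by (rule matched_bipartite.balanced_if_hits_large_rectangles)

lemma sum_Pow_card:
  assumes "finite A"
  shows "(\<Sum>X\<in>Pow A. f (card X)) = (\<Sum>k\<le>card A. of_nat (card A choose k) * f k)"
proof -
  have "(\<Sum>X\<in>Pow A. f (card X)) = (\<Sum>k\<le>card A. \<Sum>X\<in>{X \<in> Pow A. card X = k}. f (card X))"
    by (rule sum.group[symmetric]) (use assms in \<open>auto intro: card_mono\<close>)
  also have "\<dots> = (\<Sum>k\<le>card A. of_nat (card A choose k) * f k)"
  proof (rule sum.cong[OF refl])
    fix k
    have "{X \<in> Pow A. card X = k} = {X. X \<subseteq> A \<and> card X = k}"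
      by auto
    then have "(\<Sum>X\<in>{X \<in> Pow A. card X = k}. f (card X)) = of_nat (card {X. X \<subseteq> A \<and> card X = k}) * f k"
      by simp
    then show "(\<Sum>X\<in>{X \<in> Pow A. card X = k}. f (card X)) = of_nat (card A choose k) * f k"
      using n_subsets[OF assms] by simp
  qed
  finally show ?thesis .
qed

lemma measure_pmf_of_set_Pow_disjoint:
  assumes "finite U" "Z \<subseteq> U"
  shows "measure_pmf.prob (pmf_of_set (Pow U)) {B. B \<inter> Z = {}} = (1 / 2) ^ card Z"
proof -
  have "measure_pmf.prob (pmf_of_set (Pow U)) {B. B \<inter> Z = {}}
      = card (Pow U \<inter> {B. B \<inter> Z = {}}) / card (Pow U)"
    using assms(1) by (intro measure_pmf_of_set) auto
  also have "Pow U \<inter> {B. B \<inter> Z = {}} = Pow (U - Z)"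
    by auto
  also have "real (card (Pow (U - Z))) / card (Pow U) = 2 ^ (card U - card Z) / 2 ^ card U"
    using assms by (simp add: card_Pow card_Diff_subset finite_subset)
  also have "\<dots> = (1 / 2) ^ card Z"
    using assms by (simp add: power_diff power_one_over card_mono)
  finally show ?thesis .
qed

lemma binomial_term_le_ordered:
  fixes n x y :: nat
  assumes "x \<le> y" "1 \<le> x" "n \<le> x + y + x" "y \<le> n" and small: "real n ^ 3 \<le> 2 ^ (n div 3)"
  shows "real (n choose x) * real (n choose y) * (1 / 2) ^ (x * y) \<le> real n ^ 3 / 2 ^ (n div 3)"
proof -
  have "real (n choose x) \<le> real n ^ x"
    using binomial_le_pow[of x n] assms by (metis of_nat_le_iff of_nat_power le_trans)
  moreover have "real (n choose y) \<le> real n ^ (2 * x)"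
  proof -
    have "n choose y = n choose (n - y)"
      using binomial_symmetric[OF assms(4)] .
    also have "\<dots> \<le> n ^ (n - y)"
      by (rule binomial_le_pow) simp
    also have "\<dots> \<le> n ^ (2 * x)"
      by (rule power_increasing) (use assms in auto)
    finally show ?thesis
      by (metis of_nat_le_iff of_nat_power)
  qed
  moreover have "(1 / 2 :: real) ^ (x * y) \<le> (1 / 2) ^ (x * (n div 3))"
    by (rule power_decreasing) (use assms in auto)
  ultimately have "real (n choose x) * real (n choose y) * (1 / 2) ^ (x * y)
      \<le> real n ^ x * real n ^ (2 * x) * (1 / 2) ^ (x * (n div 3))"
    by (intro mult_mono) auto
  also have "\<dots> = (real n ^ 3 / 2 ^ (n div 3)) ^ x"
    by (simp add: power_add[symmetric] power_mult[symmetric] power_divide power_mult_distrib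
        mult.commute mult_2 power_one_over)
  also have "\<dots> \<le> real n ^ 3 / 2 ^ (n div 3)"
    using power_decreasing[of 1 x "real n ^ 3 / 2 ^ (n div 3)"] small assms(2) by simp
  finally show ?thesis .
qed

lemma large_rectangle_binomial_term_le:
  assumes "large_rectangle n x y" "x \<le> n" "y \<le> n" "real n ^ 3 \<le> 2 ^ (n div 3)"
  shows "real (n choose x) * real (n choose y) * (1 / 2) ^ (x * y) \<le> real n ^ 3 / 2 ^ (n div 3)"
proof (cases "x \<le> y")
  case True
  then show ?thesis
    using assms binomial_term_le_ordered[of x y n] by (simp add: large_rectangle_def)
next
  case False
  then show ?thesis
    using assms binomial_term_le_ordered[of y x n] by (simp add: large_rectangle_def mult_ac)
qed

lemma prob_not_hits_large_rectangles_le: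
  assumes "finite X" "finite Y" "card X = n" "card Y = n" and small: "real n ^ 3 \<le> 2 ^ (n div 3)"
  shows "measure_pmf.prob (pmf_of_set (Pow (X \<times> Y))) {B. \<not> hits_large_rectangles n X Y B}
    \<le> real (n + 1) ^ 2 * (real n ^ 3 / 2 ^ (n div 3))"
proof -
  define p where "p = pmf_of_set (Pow (X \<times> Y))"
  define F where "F = {(S, T) \<in> Pow X \<times> Pow Y. large_rectangle n (card S) (card T)}"
  define f where "f s t = (if large_rectangle n s t then (1 / 2 :: real) ^ (s * t) else 0)" for s t
  have "finite F"
    unfolding F_def using assms(1,2) by (auto intro: finite_subset[of _ "Pow X \<times> Pow Y"])
  have "{B. \<not> hits_large_rectangles n X Y B} = (\<Union>(S, T)\<in>F. {B. B \<inter> S \<times> T = {}})"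
    unfolding hits_large_rectangles_def F_def by blast
  then have "measure_pmf.prob p {B. \<not> hits_large_rectangles n X Y B}
      \<le> (\<Sum>(S, T)\<in>F. measure_pmf.prob p {B. B \<inter> S \<times> T = {}})"
    using \<open>finite F\<close> by (simp add: measure_pmf.finite_measure_subadditive_finite case_prod_unfold)
  also have "\<dots> = (\<Sum>(S, T)\<in>F. (1 / 2) ^ (card S * card T))"
    unfolding p_def F_def using assms(1,2)
    by (intro sum.cong refl) (auto simp: card_cartesian_product[symmetric] intro!: measure_pmf_of_set_Pow_disjoint)
  also have "\<dots> = (\<Sum>(S, T)\<in>Pow X \<times> Pow Y. f (card S) (card T))"
    using assms(1,2) by (intro sum.mono_neutral_cong_left) (auto simp: F_def f_def split: if_splits)
  also have "\<dots> = (\<Sum>S\<in>Pow X. \<Sum>T\<in>Pow Y. f (card S) (card T))"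
    by (rule sum.cartesian_product[symmetric])
  also have "\<dots> = (\<Sum>S\<in>Pow X. \<Sum>t\<le>n. real (n choose t) * f (card S) t)"
    using assms(2,4) by (simp add: sum_Pow_card)
  also have "\<dots> = (\<Sum>s\<le>n. real (n choose s) * (\<Sum>t\<le>n. real (n choose t) * f s t))"
    using sum_Pow_card[OF assms(1), of "\<lambda>s. \<Sum>t\<le>n. real (n choose t) * f s t"] assms(3) by simp
  also have "\<dots> = (\<Sum>s\<le>n. \<Sum>t\<le>n. real (n choose s) * (real (n choose t) * f s t))"
    by (simp add: sum_distrib_left)
  also have "\<dots> \<le> (\<Sum>s\<le>n. \<Sum>t\<le>n. real n ^ 3 / 2 ^ (n div 3))"
    using large_rectangle_binomial_term_le[OF _ _ _ small]
    by (intro sum_mono) (auto simp: f_def mult.assoc)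
  also have "\<dots> = real (n + 1) ^ 2 * (real n ^ 3 / 2 ^ (n div 3))"
    by (simp add: power2_eq_square)
  finally show ?thesis
    unfolding p_def .
qed

lemma prob_hits_large_rectangles_ge:
  assumes "finite X" "finite Y" "card X = n" "card Y = n" "1 \<le> n"
    and bound: "real n * real (n + 1) ^ 2 * real n ^ 3 \<le> 2 ^ (n div 3)"
  shows "1 - 1 / real n
    \<le> measure_pmf.prob (pmf_of_set (Pow (X \<times> Y))) {B. hits_large_rectangles n X Y B}"
proof -
  have "n ^ 3 \<le> n * (n + 1) ^ 2 * n ^ 3"
    using assms(5) by simp
  then have "real n ^ 3 \<le> real n * real (n + 1) ^ 2 * real n ^ 3"
    by (metis of_nat_le_iff of_nat_mult of_nat_power)
  then have small: "real n ^ 3 \<le> 2 ^ (n div 3)"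
    using bound by linarith
  have "measure_pmf.prob (pmf_of_set (Pow (X \<times> Y))) {B. \<not> hits_large_rectangles n X Y B}
      \<le> real (n + 1) ^ 2 * (real n ^ 3 / 2 ^ (n div 3))"
    by (rule prob_not_hits_large_rectangles_le[OF assms(1-4) small])
  also have "\<dots> \<le> 1 / real n"
    using bound assms(5) by (simp add: field_simps)
  finally show ?thesis
    using measure_pmf.prob_compl[of "{B. hits_large_rectangles n X Y B}" "pmf_of_set (Pow (X \<times> Y))"]
    by (simp add: Compl_eq_Diff_UNIV[symmetric] Collect_neg_eq)
qed

lemma eventually_cube_bound:
  "eventually (\<lambda>n::nat. real n * real (n + 1) ^ 2 * real n ^ 3 \<le> 2 ^ (n div 3)) at_top"
proof -
  have "eventually (\<lambda>n::nat. real n * real (n + 1) ^ 2 * real n ^ 3 \<le> 2 powr (real n / 3 - 1)) at_top"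
    by real_asymp
  then show ?thesis
  proof (rule eventually_mono)
    fix n :: nat
    assume "real n * real (n + 1) ^ 2 * real n ^ 3 \<le> 2 powr (real n / 3 - 1)"
    also have "2 powr (real n / 3 - 1) \<le> 2 powr real (n div 3)"
      by (intro powr_mono) linarith+
    finally show "real n * real (n + 1) ^ 2 * real n ^ 3 \<le> 2 ^ (n div 3)"
      by (simp add: powr_realpow)
  qed
qed

lemma prob_hits_large_rectangles_le_prob_balanced:
  assumes "bij_betw \<pi> {..<n} {..<n}" "5 * real n \<le> \<beta>"
  shows "measure_pmf.prob (pmf_of_set (Pow (Rside n \<times> Lside n)))
      {B. hits_large_rectangles n (Rside n) (Lside n) B}
    \<le> measure_pmf.prob (pmf_of_set (Pow (Rside n \<times> Lside n)))
      {B. balanced \<beta> (Lside n \<union> Rside n) (graph_of n \<pi> B)}"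
    (is "measure_pmf.prob ?p ?H \<le> measure_pmf.prob ?p ?G")
proof -
  have "set_pmf ?p = Pow (Rside n \<times> Lside n)"
    by (rule set_pmf_of_set) (auto simp: finite_Lside finite_Rside)
  then have "?H \<inter> set_pmf ?p \<subseteq> ?G"
    using balanced_mono[OF balanced_graph_of[OF assms(1)] assms(2)] by auto
  then have "measure_pmf.prob ?p (?H \<inter> set_pmf ?p) \<le> measure_pmf.prob ?p ?G"
    by (rule measure_pmf.finite_measure_mono) simp
  then show ?thesis
    by (simp add: measure_Int_set_pmf)
qed

theorem lemma7:
  "\<exists>n0::nat. \<forall>n\<ge>n0. \<forall>\<pi>. bij_betw \<pi> {..<n} {..<n} \<longrightarrow>
     measure_pmf.prob (pmf_of_set (Pow (Rside n \<times> Lside n)))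
       {B. balanced (8 * real n) (Lside n \<union> Rside n) (graph_of n \<pi> B)}
     \<ge> 1 - 1 / real n"
proof -
  obtain N where N: "\<And>n. n \<ge> N \<Longrightarrow> real n * real (n + 1) ^ 2 * real n ^ 3 \<le> 2 ^ (n div 3)"
    using eventually_cube_bound unfolding eventually_at_top_linorder by blast
  show ?thesis
  proof (intro exI[of _ "max N 1"] allI impI)
    fix n :: nat and \<pi> :: "nat \<Rightarrow> nat"
    assume n: "max N 1 \<le> n" and \<pi>: "bij_betw \<pi> {..<n} {..<n}"
    have "1 - 1 / real n \<le> measure_pmf.prob (pmf_of_set (Pow (Rside n \<times> Lside n)))
        {B. hits_large_rectangles n (Rside n) (Lside n) B}"
      using N n
      by (intro prob_hits_large_rectangles_ge) (auto simp: finite_Lside finite_Rside card_Lside card_Rside)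
    also have "\<dots> \<le> measure_pmf.prob (pmf_of_set (Pow (Rside n \<times> Lside n)))
        {B. balanced (8 * real n) (Lside n \<union> Rside n) (graph_of n \<pi> B)}"
      using \<pi> by (rule prob_hits_large_rectangles_le_prob_balanced) simp
    finally show "measure_pmf.prob (pmf_of_set (Pow (Rside n \<times> Lside n)))
        {B. balanced (8 * real n) (Lside n \<union> Rside n) (graph_of n \<pi> B)} \<ge> 1 - 1 / real n" .
  qed
qed

end
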